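(* For $1\mid t_j=1\mid\sum C_j$ with obligatory tests, the algorithm that first executes the tests of all $n$ jobs (in any order) and afterwards executes the processing parts of all jobs in non-decreasing order of $p_j$ is $2$-competitive.
   Context: Scheduling with obligatory tests and uniform test times: $n$ jobs on a single machine, each with test time $t_j=1$ and an unknown processing time $p_j\ge0$ revealed only when the test of $j$ completes. The test of a job must be executed before its processing part (which can be executed any time afterwards); operations are non-preemptive, one at a time. $C_j$ is the completion time of the processing part of $j$; objective $\sum_jC_j$. An algorithm is $\rho$-competitive if $\mathit{ALG}\le\rho\cdot\mathit{OPT}$ on every instance, where $\mathit{OPT}$ is the offline optimum (tests also obligatory). *)

theory Defs
  imports Complex_Main
begin

text \<open>Jobs are 0..n-1; every test takes time 1, the processing part of job j takes p j >= 0.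
A schedule gives start times ts j (test of j) and sp j (processing part of j).\<close>

definition no_overlap :: "real \<Rightarrow> real \<Rightarrow> real \<Rightarrow> real \<Rightarrow> bool" where
  "no_overlap a l b m \<longleftrightarrow> a + l \<le> b \<or> b + m \<le> a"

definition feasible :: "nat \<Rightarrow> (nat \<Rightarrow> real) \<Rightarrow> (nat \<Rightarrow> real) \<Rightarrow> (nat \<Rightarrow> real) \<Rightarrow> bool" where
  "feasible n p ts sp \<longleftrightarrow>
     (\<forall>j<n. 0 \<le> ts j \<and> ts j + 1 \<le> sp j) \<and>
     (\<forall>i<n. \<forall>j<n. i \<noteq> j \<longrightarrow>
        no_overlap (ts i) 1 (ts j) 1 \<and> no_overlap (sp i) (p i) (sp j) (p j)) \<and>
     (\<forall>i<n. \<forall>j<n. no_overlap (ts i) 1 (sp j) (p j))"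

definition cost :: "nat \<Rightarrow> (nat \<Rightarrow> real) \<Rightarrow> (nat \<Rightarrow> real) \<Rightarrow> real" where
  "cost n p sp = (\<Sum>j<n. sp j + p j)"

definition opt :: "nat \<Rightarrow> (nat \<Rightarrow> real) \<Rightarrow> real" where
  "opt n p = Inf {cost n p sp | ts sp. feasible n p ts sp}"

end

theory Submission
  imports Defs
begin

text \<open>In any feasible schedule, all operations of the jobs completing no later than job j are
disjoint and end by C_j, so the sum of (1 + p_i) over these jobs is at most C_j. Summing over j and
adding the bound for the pair (i, j) to the one for (j, i) gives
2 OPT \<ge> \<Sum>_{i,j} min (1 + p_i) (1 + p_j). The algorithm completes its k-th processing part at
n + p_{\<sigma>0} + ... + p_{\<sigma>k}; since the p_{\<sigma>i} with i \<le> k are at most p_{\<sigma>k}, this is at most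
\<Sum>_i min (1 + p_{\<sigma>i}) (1 + p_{\<sigma>k}), so the algorithm's cost is bounded by the same double sum.\<close>

lemma no_overlap_commute: "no_overlap a l b m \<longleftrightarrow> no_overlap b m a l"
  unfolding no_overlap_def by auto

lemma no_overlap_if_sequential:
  fixes s l :: "nat \<Rightarrow> real"
  assumes sequential: "\<And>a b. a < b \<Longrightarrow> b < n \<Longrightarrow> s a + l a \<le> s b"
    and "a < n" "b < n" "a \<noteq> b"
  shows "no_overlap (s a) (l a) (s b) (l b)"
proof (cases "a < b")
  case True
  then show ?thesis using sequential assms(3) unfolding no_overlap_def by blast
next
  case False
  then show ?thesis using sequential assms(2,4) unfolding no_overlap_def by force
qed

text \<open>Positive lengths make the interval with the largest right endpoint lie to the right of all
others; a zero-length interval sitting at the right end of another would break this.\<close>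

lemma sum_lengths_le_if_disjoint_pos:
  fixes a l :: "'a \<Rightarrow> real"
  assumes "finite S" "\<forall>k\<in>S. 0 < l k" "\<forall>k\<in>S. 0 \<le> a k"
    "\<forall>i\<in>S. \<forall>j\<in>S. i \<noteq> j \<longrightarrow> no_overlap (a i) (l i) (a j) (l j)"
    "\<forall>k\<in>S. a k + l k \<le> C" "0 \<le> C"
  shows "(\<Sum>k\<in>S. l k) \<le> C"
  using assms
proof (induction "card S" arbitrary: S C rule: less_induct)
  case less
  show ?case
  proof (cases "S = {}")
    case True
    then show ?thesis using less.prems by simp
  next
    case False
    obtain k where k: "k \<in> S" and last: "\<forall>x\<in>S. a x + l x \<le> a k + l k"
      using ex_is_arg_min_if_finite[OF less.prems(1) False, of "\<lambda>x. - (a x + l x)"]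
      unfolding is_arg_min_def by (metis neg_le_iff_le not_le)
    have "(\<Sum>x\<in>S - {k}. l x) \<le> a k"
    proof (rule less.hyps)
      show "card (S - {k}) < card S" using k less.prems(1) by (meson card_Diff1_less)
      show "\<forall>x\<in>S - {k}. a x + l x \<le> a k"
      proof
        fix x assume x: "x \<in> S - {k}"
        then have "no_overlap (a x) (l x) (a k) (l k)" using less.prems(4) k by auto
        moreover have "a x + l x \<le> a k + l k" "0 < l x" using last less.prems(2) x by auto
        ultimately show "a x + l x \<le> a k" unfolding no_overlap_def by linarith
      qed
    qed (use less.prems k in auto)
    then have "(\<Sum>x\<in>S. l x) \<le> l k + a k"
      using k less.prems(1) by (simp add: sum.remove)
    then show ?thesis using less.prems(5) k by auto
  qed
qed

lemma sum_lengths_le_if_disjoint: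
  fixes a l :: "'a \<Rightarrow> real"
  assumes "finite S" "\<forall>k\<in>S. 0 \<le> l k" "\<forall>k\<in>S. 0 \<le> a k"
    "\<forall>i\<in>S. \<forall>j\<in>S. i \<noteq> j \<longrightarrow> no_overlap (a i) (l i) (a j) (l j)"
    "\<forall>k\<in>S. a k + l k \<le> C" "0 \<le> C"
  shows "(\<Sum>k\<in>S. l k) \<le> C"
proof -
  have "(\<Sum>k\<in>S. l k) = (\<Sum>k\<in>S \<inter> {k. 0 < l k}. l k)"
    using assms(1,2) by (intro sum.mono_neutral_right) force+
  also have "\<dots> \<le> C"
    using assms by (intro sum_lengths_le_if_disjoint_pos[where a = a]) auto
  finally show ?thesis .
qed

lemma feasible_earlier_jobs_weight_le_completion:
  assumes p_nonneg: "\<forall>j<n. 0 \<le> p j" and feas: "feasible n p ts sp" and j: "j < n"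
  shows "(\<Sum>i\<in>{i\<in>{..<n}. sp i + p i \<le> sp j + p j}. 1 + p i) \<le> sp j + p j"
proof -
  define A where "A = {i\<in>{..<n}. sp i + p i \<le> sp j + p j}"
  \<comment> \<open>operation (i, True) is the processing part of job i, (i, False) its test\<close>
  define start where "start = (\<lambda>(i, b). if b then sp i else ts i)"
  define len where "len = (\<lambda>(i, b). if b then p i else 1)"
  have test_before_proc: "\<forall>j<n. 0 \<le> ts j \<and> ts j + 1 \<le> sp j"
    and disjoint: "\<forall>i<n. \<forall>j<n. i \<noteq> j \<longrightarrow>
      no_overlap (ts i) 1 (ts j) 1 \<and> no_overlap (sp i) (p i) (sp j) (p j)"
    and test_proc: "\<forall>i<n. \<forall>j<n. no_overlap (ts i) 1 (sp j) (p j)"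
    using feas unfolding feasible_def by auto
  have "(\<Sum>i\<in>A. 1 + p i) = (\<Sum>x\<in>A \<times> UNIV. len x)"
    by (simp add: sum.cartesian_product[symmetric] UNIV_bool len_def add.commute)
  also have "\<dots> \<le> sp j + p j"
  proof (rule sum_lengths_le_if_disjoint[where a = start])
    show "\<forall>x\<in>A \<times> UNIV. \<forall>y\<in>A \<times> UNIV. x \<noteq> y \<longrightarrow>
      no_overlap (start x) (len x) (start y) (len y)"
    proof (intro ballI impI)
      fix x y :: "nat \<times> bool" assume "x \<in> A \<times> UNIV" "y \<in> A \<times> UNIV" "x \<noteq> y"
      then obtain i i' :: nat and b b' :: bool
        where "x = (i, b)" "y = (i', b')" "i < n" "i' < n" "i = i' \<longrightarrow> b \<noteq> b'"
        unfolding A_def by force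
      then show "no_overlap (start x) (len x) (start y) (len y)"
        using disjoint test_proc no_overlap_commute[of "ts i'" 1]
        by (cases b; cases b') (auto simp: start_def len_def)
    qed
    show "\<forall>x\<in>A \<times> UNIV. 0 \<le> start x" "\<forall>x\<in>A \<times> UNIV. start x + len x \<le> sp j + p j"
      using test_before_proc p_nonneg by (fastforce simp: A_def start_def len_def)+
    show "0 \<le> sp j + p j" using test_before_proc p_nonneg j by force
  qed (use p_nonneg in \<open>auto simp: A_def len_def\<close>)
  finally show ?thesis unfolding A_def .
qed

text \<open>Adding the prefix bounds for (i, j) and (j, i): whichever of the two jobs completes first
contributes its weight, and that weight is at least the smaller one.\<close>

lemma sum_min_le_twice_sum_if_prefix_bounded:
  fixes w C :: "'a \<Rightarrow> real"
  assumes "finite S" and w_nonneg: "\<forall>i\<in>S. 0 \<le> w i"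
    and prefix: "\<forall>j\<in>S. (\<Sum>i\<in>{i\<in>S. C i \<le> C j}. w i) \<le> C j"
  shows "(\<Sum>j\<in>S. \<Sum>i\<in>S. min (w i) (w j)) \<le> 2 * (\<Sum>j\<in>S. C j)"
proof -
  define T where "T = (\<Sum>j\<in>S. \<Sum>i\<in>S. if C i \<le> C j then w i else 0)"
  have "T \<le> (\<Sum>j\<in>S. C j)"
    unfolding T_def using prefix \<open>finite S\<close> by (intro sum_mono) (simp add: sum.inter_filter)
  have "(\<Sum>j\<in>S. \<Sum>i\<in>S. min (w i) (w j))
      \<le> (\<Sum>j\<in>S. \<Sum>i\<in>S. (if C i \<le> C j then w i else 0) + (if C j \<le> C i then w j else 0))"
    using w_nonneg by (intro sum_mono) (auto simp: min_def)
  also have "\<dots> = T + (\<Sum>j\<in>S. \<Sum>i\<in>S. if C j \<le> C i then w j else 0)"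
    unfolding T_def by (simp add: sum.distrib)
  also have "(\<Sum>j\<in>S. \<Sum>i\<in>S. if C j \<le> C i then w j else 0) = T"
    unfolding T_def by (rule sum.swap)
  finally show ?thesis using \<open>T \<le> (\<Sum>j\<in>S. C j)\<close> by linarith
qed

lemma sum_min_le_twice_cost:
  assumes p_nonneg: "\<forall>j<n. 0 \<le> p j" and feas: "feasible n p ts sp"
  shows "(\<Sum>j<n. \<Sum>i<n. min (1 + p i) (1 + p j)) \<le> 2 * cost n p sp"
  unfolding cost_def
  using feasible_earlier_jobs_weight_le_completion[OF p_nonneg feas] p_nonneg
  by (intro sum_min_le_twice_sum_if_prefix_bounded[where C = "\<lambda>j. sp j + p j"]) auto

lemma sum_min_le_twice_opt:
  assumes p_nonneg: "\<forall>j<n. 0 \<le> p j" and feas: "feasible n p ts sp"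
  shows "(\<Sum>j<n. \<Sum>i<n. min (1 + p i) (1 + p j)) \<le> 2 * opt n p"
proof -
  have "(\<Sum>j<n. \<Sum>i<n. min (1 + p i) (1 + p j)) / 2 \<le> opt n p"
    unfolding opt_def
  proof (rule cInf_greatest)
    show "{cost n p sp |ts sp. feasible n p ts sp} \<noteq> {}" using feas by blast
  qed (use sum_min_le_twice_cost[OF p_nonneg] in fastforce)
  then show ?thesis by simp
qed

lemma tests_first_then_consecutive_processing_feasible:
  fixes n :: nat and p ts sp :: "nat \<Rightarrow> real" and \<tau> \<sigma> :: "nat \<Rightarrow> nat"
  assumes p_nonneg: "\<forall>j<n. 0 \<le> p j"
    and tau_perm: "bij_betw \<tau> {..<n} {..<n}"
    and sigma_perm: "bij_betw \<sigma> {..<n} {..<n}"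
    and tests_first: "\<forall>k<n. ts (\<tau> k) = real k"
    and proc_consecutive: "\<forall>k<n. sp (\<sigma> k) = real n + (\<Sum>i<k. p (\<sigma> i))"
  shows "feasible n p ts sp"
proof -
  have tau_onto: "\<exists>k<n. j = \<tau> k" and sigma_onto: "\<exists>k<n. j = \<sigma> k" if "j < n" for j
    using that bij_betw_imp_surj_on[OF tau_perm] bij_betw_imp_surj_on[OF sigma_perm]
    by (metis imageE lessThan_iff)+
  have p_sigma_nonneg: "0 \<le> p (\<sigma> i)" if "i < n" for i
    using that p_nonneg bij_betwE[OF sigma_perm] by blast
  have tests_sequential: "ts (\<tau> a) + 1 \<le> ts (\<tau> b)" if "a < b" "b < n" for a b
    using that tests_first by simp
  have procs_sequential: "sp (\<sigma> a) + p (\<sigma> a) \<le> sp (\<sigma> b)" if "a < b" "b < n" for a b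
  proof -
    have "(\<Sum>i<Suc a. p (\<sigma> i)) \<le> (\<Sum>i<b. p (\<sigma> i))"
      using that p_sigma_nonneg by (intro sum_mono2) auto
    then show ?thesis using proc_consecutive that by simp
  qed
  have tests_before_n: "0 \<le> ts j \<and> ts j + 1 \<le> real n" if "j < n" for j
    using tau_onto[OF that] tests_first by force
  have procs_after_n: "real n \<le> sp j" if j: "j < n" for j
  proof -
    obtain k where "k < n" "j = \<sigma> k" using sigma_onto[OF j] by blast
    moreover have "0 \<le> (\<Sum>i<k. p (\<sigma> i))"
      using \<open>k < n\<close> p_sigma_nonneg by (intro sum_nonneg) auto
    ultimately show ?thesis using proc_consecutive by simp
  qed
  show ?thesis
    unfolding feasible_def
  proof (intro conjI allI impI)
    fix j assume "j < n"
    then show "0 \<le> ts j" "ts j + 1 \<le> sp j" using tests_before_n procs_after_n by force+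
  next
    fix i j assume "i < n" "j < n"
    then show "no_overlap (ts i) 1 (sp j) (p j)"
      using tests_before_n procs_after_n unfolding no_overlap_def by force
  next
    fix i j assume "i < n" "j < n" "i \<noteq> j"
    then show "no_overlap (ts i) 1 (ts j) 1"
      using tau_onto no_overlap_if_sequential[of n "ts \<circ> \<tau>" "\<lambda>_. 1"] tests_sequential
      by (metis comp_apply)
    show "no_overlap (sp i) (p i) (sp j) (p j)"
      using \<open>i < n\<close> \<open>j < n\<close> \<open>i \<noteq> j\<close> sigma_onto procs_sequential
        no_overlap_if_sequential[of n "sp \<circ> \<sigma>" "p \<circ> \<sigma>"]
      by (metis comp_apply)
  qed
qed

lemma sorted_processing_cost_le_sum_min:
  fixes n :: nat and p sp :: "nat \<Rightarrow> real" and \<sigma> :: "nat \<Rightarrow> nat"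
  assumes p_nonneg: "\<forall>j<n. 0 \<le> p j"
    and sigma_perm: "bij_betw \<sigma> {..<n} {..<n}"
    and sigma_sorted: "\<forall>a b. a \<le> b \<and> b < n \<longrightarrow> p (\<sigma> a) \<le> p (\<sigma> b)"
    and proc_consecutive: "\<forall>k<n. sp (\<sigma> k) = real n + (\<Sum>i<k. p (\<sigma> i))"
  shows "cost n p sp \<le> (\<Sum>j<n. \<Sum>i<n. min (1 + p i) (1 + p j))"
proof -
  have p_sigma_nonneg: "0 \<le> p (\<sigma> i)" if "i < n" for i
    using that p_nonneg bij_betwE[OF sigma_perm] by blast
  have completion_le: "sp (\<sigma> k) + p (\<sigma> k) \<le> (\<Sum>i<n. min (1 + p (\<sigma> i)) (1 + p (\<sigma> k)))"
    if "k < n" for k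
  proof -
    have "sp (\<sigma> k) + p (\<sigma> k) = (\<Sum>i<n. 1) + (\<Sum>i<Suc k. min (p (\<sigma> i)) (p (\<sigma> k)))"
      using proc_consecutive sigma_sorted that by (simp add: min_absorb1)
    also have "\<dots> \<le> (\<Sum>i<n. 1) + (\<Sum>i<n. min (p (\<sigma> i)) (p (\<sigma> k)))"
      using that p_sigma_nonneg by (intro add_left_mono sum_mono2) auto
    also have "\<dots> = (\<Sum>i<n. min (1 + p (\<sigma> i)) (1 + p (\<sigma> k)))"
      by (simp only: sum.distrib[symmetric] min_add_distrib_right)
    finally show ?thesis .
  qed
  have "cost n p sp = (\<Sum>k<n. sp (\<sigma> k) + p (\<sigma> k))"
    unfolding cost_def using sum.reindex_bij_betw[OF sigma_perm, of "\<lambda>j. sp j + p j"] by simp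
  also have "\<dots> \<le> (\<Sum>k<n. \<Sum>i<n. min (1 + p (\<sigma> i)) (1 + p (\<sigma> k)))"
    using completion_le by (intro sum_mono) auto
  also have "\<dots> = (\<Sum>k<n. \<Sum>i<n. min (1 + p i) (1 + p (\<sigma> k)))"
  proof (rule sum.cong[OF refl])
    fix k
    show "(\<Sum>i<n. min (1 + p (\<sigma> i)) (1 + p (\<sigma> k))) = (\<Sum>i<n. min (1 + p i) (1 + p (\<sigma> k)))"
      using sum.reindex_bij_betw[OF sigma_perm, of "\<lambda>i. min (1 + p i) (1 + p (\<sigma> k))"] by simp
  qed
  also have "\<dots> = (\<Sum>j<n. \<Sum>i<n. min (1 + p i) (1 + p j))"
    using sum.reindex_bij_betw[OF sigma_perm, of "\<lambda>j. \<Sum>i<n. min (1 + p i) (1 + p j)"] by simp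
  finally show ?thesis .
qed

theorem mainTheorem15:
  fixes n :: nat and p ts sp :: "nat \<Rightarrow> real" and \<tau> \<sigma> :: "nat \<Rightarrow> nat"
  assumes p_nonneg: "\<forall>j<n. 0 \<le> p j"
    and tau_perm: "bij_betw \<tau> {..<n} {..<n}"
    and sigma_perm: "bij_betw \<sigma> {..<n} {..<n}"
    and sigma_sorted: "\<forall>a b. a \<le> b \<and> b < n \<longrightarrow> p (\<sigma> a) \<le> p (\<sigma> b)"
    and tests_first: "\<forall>k<n. ts (\<tau> k) = real k"
    and proc_sorted: "\<forall>k<n. sp (\<sigma> k) = real n + (\<Sum>i<k. p (\<sigma> i))"
  shows "feasible n p ts sp \<and> cost n p sp \<le> 2 * opt n p"
proof
  show feas: "feasible n p ts sp"
    using tests_first_then_consecutive_processing_feasible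
      [OF p_nonneg tau_perm sigma_perm tests_first proc_sorted] .
  have "cost n p sp \<le> (\<Sum>j<n. \<Sum>i<n. min (1 + p i) (1 + p j))"
    using sorted_processing_cost_le_sum_min[OF p_nonneg sigma_perm sigma_sorted proc_sorted] .
  also have "\<dots> \<le> 2 * opt n p"
    using sum_min_le_twice_opt[OF p_nonneg feas] .
  finally show "cost n p sp \<le> 2 * opt n p" .
qed

end
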